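(* Let $\alpha$ be a quasiorder on a set $A$. The following are equivalent: (1) $\alpha$ is a half-space on $A$; (2) for every three-element subset $B\subseteq A$, the restriction $\alpha\cap(B\times B)$ is a half-space on $B$; (3) for all $x,y,z\in A$: if $(x,y)\notin\alpha$, $(y,x)\notin\alpha$, $(x,z)\in\alpha$ and $z\neq x$, then $(y,z)\in\alpha$; (4) for all $x,y,z\in A$: if $(z,y)\notin\alpha$, $(y,z)\notin\alpha$, $(x,z)\in\alpha$ and $x\neq z$, then $(x,y)\in\alpha$.
   Context: A quasiorder on a set $A$ is a reflexive and transitive relation on $A$; $\Delta_A=\{(a,a)\mid a\in A\}$. A quasiorder $\alpha$ on $A$ is a half-space on $A$ if there exists a quasiorder $\beta$ on $A$ with $\alpha\cup\beta=A\times A$ and $\alpha\cap\beta=\Delta_A$ (equivalently, $\Delta_A\cup((A\times A)\setminus\alpha)$ is transitive). *)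

theory Defs
  imports Main
begin

definition quasiorder_on :: "'a set \<Rightarrow> ('a \<times> 'a) set \<Rightarrow> bool" where
  "quasiorder_on A r \<longleftrightarrow> r \<subseteq> A \<times> A \<and> refl_on A r \<and> trans r"

definition half_space_on :: "'a set \<Rightarrow> ('a \<times> 'a) set \<Rightarrow> bool" where
  "half_space_on A \<alpha> \<longleftrightarrow> quasiorder_on A \<alpha> \<and>
     (\<exists>\<beta>. quasiorder_on A \<beta> \<and> \<alpha> \<union> \<beta> = A \<times> A \<and> \<alpha> \<inter> \<beta> = Id_on A)"

end

theory Submission
  imports Defs
begin

text \<open>A quasiorder \<open>\<alpha>\<close> on \<open>A\<close> is a half-space exactly when its only possible partner is
  \<open>Id_on A \<union> (A \<times> A - \<alpha>)\<close>, and this relation is transitive iff \<open>\<alpha>\<close> is cotransitive off the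
  diagonal: \<open>(a, c) \<in> \<alpha>\<close> with \<open>a \<noteq> c\<close> forces \<open>(a, b) \<in> \<alpha>\<close> or \<open>(b, c) \<in> \<alpha>\<close>. This condition
  speaks about three points at a time, which gives the local characterisation (2); (3) and (4)
  are the same condition once the cases where \<open>b\<close> is comparable with \<open>a\<close> resp. \<open>c\<close> are
  settled by transitivity.\<close>

definition cotransitive_on :: "'a set \<Rightarrow> ('a \<times> 'a) set \<Rightarrow> bool" where
  "cotransitive_on A r \<longleftrightarrow>
     (\<forall>a\<in>A. \<forall>b\<in>A. \<forall>c\<in>A. (a, c) \<in> r \<and> a \<noteq> c \<longrightarrow> (a, b) \<in> r \<or> (b, c) \<in> r)"

lemma quasiorder_on_restrict:
  assumes "quasiorder_on A r" and "B \<subseteq> A"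
  shows "quasiorder_on B (r \<inter> B \<times> B)"
  using assms unfolding quasiorder_on_def refl_on_def trans_def by blast

lemma cotransitive_on_restrict:
  assumes "cotransitive_on A r" and "B \<subseteq> A"
  shows "cotransitive_on B (r \<inter> B \<times> B)"
  using assms unfolding cotransitive_on_def by blast

lemma trans_Id_on_Un_complement:
  assumes "cotransitive_on A r"
  shows "trans (Id_on A \<union> (A \<times> A - r))"
proof (rule transI)
  fix x y z
  assume xy: "(x, y) \<in> Id_on A \<union> (A \<times> A - r)" and yz: "(y, z) \<in> Id_on A \<union> (A \<times> A - r)"
  show "(x, z) \<in> Id_on A \<union> (A \<times> A - r)"
  proof (cases "x = y \<or> y = z")
    case True
    then show ?thesis using xy yz by auto
  next
    case False
    then have "x \<in> A" "y \<in> A" "z \<in> A" "(x, y) \<notin> r" "(y, z) \<notin> r"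
      using xy yz by auto
    then show ?thesis using assms unfolding cotransitive_on_def by auto
  qed
qed

lemma half_space_on_iff_cotransitive_on:
  assumes "quasiorder_on A r"
  shows "half_space_on A r \<longleftrightarrow> cotransitive_on A r"
proof
  assume "half_space_on A r"
  then obtain \<beta> where \<beta>: "quasiorder_on A \<beta>" "r \<union> \<beta> = A \<times> A" "r \<inter> \<beta> = Id_on A"
    unfolding half_space_on_def by blast
  show "cotransitive_on A r"
    unfolding cotransitive_on_def
  proof (intro ballI impI)
    fix a b c
    assume abc: "a \<in> A" "b \<in> A" "c \<in> A" and ac: "(a, c) \<in> r \<and> a \<noteq> c"
    show "(a, b) \<in> r \<or> (b, c) \<in> r"
    proof (rule ccontr)
      assume "\<not> ?thesis"
      with \<beta>(2) abc have "(a, b) \<in> \<beta>" "(b, c) \<in> \<beta>" by blast+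
      with \<beta>(1) have "(a, c) \<in> \<beta>"
        unfolding quasiorder_on_def by (blast dest: transD)
      with ac \<beta>(3) show False by (metis IntI Id_onE prod.inject)
    qed
  qed
next
  assume cotrans: "cotransitive_on A r"
  let ?\<beta> = "Id_on A \<union> (A \<times> A - r)"
  have "quasiorder_on A ?\<beta>"
    using trans_Id_on_Un_complement[OF cotrans] unfolding quasiorder_on_def refl_on_def by auto
  moreover have "r \<union> ?\<beta> = A \<times> A" and "r \<inter> ?\<beta> = Id_on A"
    using assms unfolding quasiorder_on_def refl_on_def by auto
  ultimately show "half_space_on A r"
    using assms unfolding half_space_on_def by blast
qed

lemma cotransitive_on_iff_three_element_subsets:
  assumes "refl_on A r"
  shows "cotransitive_on A r \<longleftrightarrow>
    (\<forall>B. B \<subseteq> A \<and> card B = 3 \<longrightarrow> cotransitive_on B (r \<inter> B \<times> B))"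
proof
  assume "cotransitive_on A r"
  then show "\<forall>B. B \<subseteq> A \<and> card B = 3 \<longrightarrow> cotransitive_on B (r \<inter> B \<times> B)"
    using cotransitive_on_restrict by blast
next
  assume triples: "\<forall>B. B \<subseteq> A \<and> card B = 3 \<longrightarrow> cotransitive_on B (r \<inter> B \<times> B)"
  show "cotransitive_on A r"
    unfolding cotransitive_on_def
  proof (intro ballI impI)
    fix a b c
    assume abc: "a \<in> A" "b \<in> A" "c \<in> A" and ac: "(a, c) \<in> r \<and> a \<noteq> c"
    show "(a, b) \<in> r \<or> (b, c) \<in> r"
    proof (cases "b = a \<or> b = c")
      case True
      then show ?thesis using assms abc unfolding refl_on_def by auto
    next
      case False
      with ac abc have "{a, b, c} \<subseteq> A" "card {a, b, c} = 3" by auto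
      with triples have "cotransitive_on {a, b, c} (r \<inter> {a, b, c} \<times> {a, b, c})" by blast
      with ac show ?thesis unfolding cotransitive_on_def by blast
    qed
  qed
qed

lemma cotransitive_on_iff_incomparable_below_upper:
  assumes "trans r"
  shows "cotransitive_on A r \<longleftrightarrow>
    (\<forall>x\<in>A. \<forall>y\<in>A. \<forall>z\<in>A. (x, y) \<notin> r \<and> (y, x) \<notin> r \<and> (x, z) \<in> r \<and> z \<noteq> x \<longrightarrow> (y, z) \<in> r)"
proof
  assume "cotransitive_on A r"
  then show "\<forall>x\<in>A. \<forall>y\<in>A. \<forall>z\<in>A. (x, y) \<notin> r \<and> (y, x) \<notin> r \<and> (x, z) \<in> r \<and> z \<noteq> x \<longrightarrow> (y, z) \<in> r"
    unfolding cotransitive_on_def by blast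
next
  assume incomparable: "\<forall>x\<in>A. \<forall>y\<in>A. \<forall>z\<in>A.
    (x, y) \<notin> r \<and> (y, x) \<notin> r \<and> (x, z) \<in> r \<and> z \<noteq> x \<longrightarrow> (y, z) \<in> r"
  show "cotransitive_on A r"
    unfolding cotransitive_on_def
  proof (intro ballI impI)
    fix a b c
    assume abc: "a \<in> A" "b \<in> A" "c \<in> A" and ac: "(a, c) \<in> r \<and> a \<noteq> c"
    show "(a, b) \<in> r \<or> (b, c) \<in> r"
    proof (cases "(b, a) \<in> r")
      case True
      with ac assms show ?thesis by (blast dest: transD)
    next
      case False
      with incomparable abc ac show ?thesis by blast
    qed
  qed
qed

lemma cotransitive_on_iff_incomparable_above_lower:
  assumes "trans r"
  shows "cotransitive_on A r \<longleftrightarrow>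
    (\<forall>x\<in>A. \<forall>y\<in>A. \<forall>z\<in>A. (z, y) \<notin> r \<and> (y, z) \<notin> r \<and> (x, z) \<in> r \<and> x \<noteq> z \<longrightarrow> (x, y) \<in> r)"
proof
  assume "cotransitive_on A r"
  then show "\<forall>x\<in>A. \<forall>y\<in>A. \<forall>z\<in>A. (z, y) \<notin> r \<and> (y, z) \<notin> r \<and> (x, z) \<in> r \<and> x \<noteq> z \<longrightarrow> (x, y) \<in> r"
    unfolding cotransitive_on_def by blast
next
  assume incomparable: "\<forall>x\<in>A. \<forall>y\<in>A. \<forall>z\<in>A.
    (z, y) \<notin> r \<and> (y, z) \<notin> r \<and> (x, z) \<in> r \<and> x \<noteq> z \<longrightarrow> (x, y) \<in> r"
  show "cotransitive_on A r"
    unfolding cotransitive_on_def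
  proof (intro ballI impI)
    fix a b c
    assume abc: "a \<in> A" "b \<in> A" "c \<in> A" and ac: "(a, c) \<in> r \<and> a \<noteq> c"
    show "(a, b) \<in> r \<or> (b, c) \<in> r"
    proof (cases "(c, b) \<in> r")
      case True
      with ac assms show ?thesis by (blast dest: transD)
    next
      case False
      with incomparable abc ac show ?thesis by blast
    qed
  qed
qed

theorem proposition2p2:
  fixes A :: "'a set" and \<alpha> :: "('a \<times> 'a) set"
  assumes "quasiorder_on A \<alpha>"
  shows "(half_space_on A \<alpha> \<longleftrightarrow>
           (\<forall>B. B \<subseteq> A \<and> card B = 3 \<longrightarrow> half_space_on B (\<alpha> \<inter> (B \<times> B))))
       \<and> (half_space_on A \<alpha> \<longleftrightarrow>
           (\<forall>x\<in>A. \<forall>y\<in>A. \<forall>z\<in>A. (x, y) \<notin> \<alpha> \<and> (y, x) \<notin> \<alpha> \<and> (x, z) \<in> \<alpha> \<and> z \<noteq> x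
              \<longrightarrow> (y, z) \<in> \<alpha>))
       \<and> (half_space_on A \<alpha> \<longleftrightarrow>
           (\<forall>x\<in>A. \<forall>y\<in>A. \<forall>z\<in>A. (z, y) \<notin> \<alpha> \<and> (y, z) \<notin> \<alpha> \<and> (x, z) \<in> \<alpha> \<and> x \<noteq> z
              \<longrightarrow> (x, y) \<in> \<alpha>))"
proof -
  have refl: "refl_on A \<alpha>" and trans: "trans \<alpha>"
    using assms unfolding quasiorder_on_def by auto
  have half_space: "half_space_on A \<alpha> \<longleftrightarrow> cotransitive_on A \<alpha>"
    using assms by (rule half_space_on_iff_cotransitive_on)
  have restricted: "half_space_on B (\<alpha> \<inter> B \<times> B) \<longleftrightarrow> cotransitive_on B (\<alpha> \<inter> B \<times> B)"
    if "B \<subseteq> A" for B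
    using half_space_on_iff_cotransitive_on[OF quasiorder_on_restrict[OF assms that]] .
  have "half_space_on A \<alpha> \<longleftrightarrow>
      (\<forall>B. B \<subseteq> A \<and> card B = 3 \<longrightarrow> half_space_on B (\<alpha> \<inter> (B \<times> B)))"
    by (simp add: half_space restricted cotransitive_on_iff_three_element_subsets[OF refl])
  then show ?thesis
    using half_space cotransitive_on_iff_incomparable_below_upper[OF trans]
      cotransitive_on_iff_incomparable_above_lower[OF trans]
    by (simp only:)
qed

end
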